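(* Let $G$ be a finite group whose non-centralizer graph $\Upsilon_G$ is regular. Then for each $x\in G$, the centralizer $C_G(x)$ is a normal subgroup of $G$ and $G/C_G(x)$ is isomorphic to a subgroup of $Z(G)$.
   Context: For a finite group $G$, $C_G(x)$ denotes the centralizer of $x\in G$ and $Z(G)$ the center. The non-centralizer graph $\Upsilon_G$ is the simple graph with vertex set $G$ in which two distinct vertices $x,y$ are adjacent if and only if $C_G(x)\neq C_G(y)$. A graph is regular if all its vertices have the same degree. *)

theory Defs
  imports "HOL-Algebra.Algebra"
begin

definition centralizer :: "('a, 'b) monoid_scheme \<Rightarrow> 'a \<Rightarrow> 'a set" where
  "centralizer G x = {y \<in> carrier G. x \<otimes>\<^bsub>G\<^esub> y = y \<otimes>\<^bsub>G\<^esub> x}"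

definition center :: "('a, 'b) monoid_scheme \<Rightarrow> 'a set" where
  "center G = {z \<in> carrier G. \<forall>y \<in> carrier G. z \<otimes>\<^bsub>G\<^esub> y = y \<otimes>\<^bsub>G\<^esub> z}"

definition noncentralizer_adj :: "('a, 'b) monoid_scheme \<Rightarrow> 'a \<Rightarrow> 'a \<Rightarrow> bool" where
  "noncentralizer_adj G x y \<longleftrightarrow> x \<noteq> y \<and> centralizer G x \<noteq> centralizer G y"

definition noncentralizer_degree :: "('a, 'b) monoid_scheme \<Rightarrow> 'a \<Rightarrow> nat" where
  "noncentralizer_degree G x = card {y \<in> carrier G. noncentralizer_adj G x y}"

definition noncentralizer_graph_regular :: "('a, 'b) monoid_scheme \<Rightarrow> bool" where
  "noncentralizer_graph_regular G \<longleftrightarrow>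
     (\<forall>x \<in> carrier G. \<forall>y \<in> carrier G. noncentralizer_degree G x = noncentralizer_degree G y)"

end

theory Submission
  imports Defs
begin

text \<open>
  The non-neighbours of a vertex \<open>y\<close> in the non-centralizer graph are the elements with the
  same centralizer as \<open>y\<close>; this set contains the coset \<open>y Z(G)\<close>, and for \<open>y = 1\<close> it is exactly
  \<open>Z(G)\<close>. Regularity therefore forces it to be equal to \<open>y Z(G)\<close>. Since \<open>y\<inverse>\<close> has the same
  centralizer as \<open>y\<close>, we get \<open>y\<inverse> \<in> y Z(G)\<close>, i.e. every square is central. Then \<open>G/Z(G)\<close> has
  exponent 2, so all commutators are central, and \<open>g \<mapsto> [g, x]\<close> is a homomorphism
  \<open>G \<rightarrow> Z(G)\<close> with kernel \<open>C\<^sub>G(x)\<close>.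
\<close>

lemma (in group) inv_commute:
  assumes "a \<in> carrier G" "b \<in> carrier G" "a \<otimes> b = b \<otimes> a"
  shows "inv a \<otimes> b = b \<otimes> inv a"
  by (metis assms inv_closed inv_solve_left inv_solve_right m_assoc m_closed)

lemma center_subset_carrier: "center G \<subseteq> carrier G"
  by (auto simp: center_def)

lemma (in group) center_commute:
  "z \<in> center G \<Longrightarrow> y \<in> carrier G \<Longrightarrow> z \<otimes> y = y \<otimes> z"
  by (simp add: center_def)

lemma (in group) subgroup_center: "subgroup (center G) G"
proof (rule subgroupI)
  have "\<one> \<in> center G"
    by (simp add: center_def)
  then show "center G \<noteq> {}"
    by blast
next
  fix a b assume a: "a \<in> center G" and b: "b \<in> center G"
  then have aG: "a \<in> carrier G" and bG: "b \<in> carrier G"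
    using center_subset_carrier[of G] by auto
  have "inv a \<otimes> y = y \<otimes> inv a" if "y \<in> carrier G" for y
    using inv_commute[OF aG that center_commute[OF a that]] .
  then show "inv a \<in> center G"
    using aG by (simp add: center_def)
  have "a \<otimes> b \<otimes> y = y \<otimes> (a \<otimes> b)" if "y \<in> carrier G" for y
  proof -
    have "a \<otimes> b \<otimes> y = a \<otimes> (y \<otimes> b)"
      using aG bG that by (simp add: center_commute[OF b that] m_assoc)
    also have "\<dots> = y \<otimes> (a \<otimes> b)"
      using aG bG that by (simp add: center_commute[OF a that] flip: m_assoc)
    finally show ?thesis .
  qed
  then show "a \<otimes> b \<in> center G"
    using aG bG by (simp add: center_def)
qed (rule center_subset_carrier)

lemma (in group) centralizer_inv:
  assumes "y \<in> carrier G"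
  shows "centralizer G (inv y) = centralizer G y"
  using assms inv_commute[of y] inv_commute[of "inv y"] by (auto simp: centralizer_def)

lemma (in group) centralizer_mult_center:
  assumes y: "y \<in> carrier G" and z: "z \<in> center G"
  shows "centralizer G (y \<otimes> z) = centralizer G y"
proof -
  have zG: "z \<in> carrier G"
    using z center_subset_carrier[of G] by blast
  have "y \<otimes> z \<otimes> w = w \<otimes> (y \<otimes> z) \<longleftrightarrow> y \<otimes> w = w \<otimes> y" if w: "w \<in> carrier G" for w
  proof -
    have "y \<otimes> z \<otimes> w = y \<otimes> w \<otimes> z"
      using y zG w by (simp add: center_commute[OF z w] m_assoc)
    moreover have "w \<otimes> (y \<otimes> z) = w \<otimes> y \<otimes> z"
      using y zG w by (simp add: m_assoc)
    ultimately show ?thesis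
      using y zG w by simp
  qed
  then show ?thesis
    by (auto simp: centralizer_def)
qed

lemma (in group) centralizer_eq_carrier_iff:
  "y \<in> carrier G \<Longrightarrow> centralizer G y = carrier G \<longleftrightarrow> y \<in> center G"
  by (auto simp: centralizer_def center_def)

definition same_centralizer :: "('a, 'b) monoid_scheme \<Rightarrow> 'a \<Rightarrow> 'a set" where
  "same_centralizer G y = {w \<in> carrier G. centralizer G w = centralizer G y}"

lemma noncentralizer_degree_eq:
  assumes "finite (carrier G)"
  shows "noncentralizer_degree G y = card (carrier G) - card (same_centralizer G y)"
proof -
  have sub: "same_centralizer G y \<subseteq> carrier G"
    by (auto simp: same_centralizer_def)
  have "{w \<in> carrier G. noncentralizer_adj G y w} = carrier G - same_centralizer G y"
    by (auto simp: noncentralizer_adj_def same_centralizer_def)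
  then show ?thesis
    using card_Diff_subset[OF finite_subset[OF sub assms] sub]
    by (simp add: noncentralizer_degree_def)
qed

lemma (in group) centralizer_one: "centralizer G \<one> = carrier G"
  by (auto simp: centralizer_def)

lemma (in group) same_centralizer_one: "same_centralizer G \<one> = center G"
proof -
  have "same_centralizer G \<one> = {w \<in> carrier G. centralizer G w = carrier G}"
    by (simp add: same_centralizer_def centralizer_one)
  also have "\<dots> = center G"
    using centralizer_eq_carrier_iff center_subset_carrier[of G] by blast
  finally show ?thesis .
qed

lemma (in group) card_same_centralizer_if_regular:
  assumes "finite (carrier G)" "noncentralizer_graph_regular G" "y \<in> carrier G"
  shows "card (same_centralizer G y) = card (center G)"
proof -
  have "noncentralizer_degree G y = noncentralizer_degree G \<one>"
    using assms(2,3) unfolding noncentralizer_graph_regular_def by blast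
  then have "card (carrier G) - card (same_centralizer G y) = card (carrier G) - card (center G)"
    by (simp add: noncentralizer_degree_eq[OF assms(1)] same_centralizer_one)
  moreover have "card (same_centralizer G y) \<le> card (carrier G)"
    by (rule card_mono[OF assms(1)]) (auto simp: same_centralizer_def)
  moreover have "card (center G) \<le> card (carrier G)"
    by (rule card_mono[OF assms(1) center_subset_carrier[of G]])
  ultimately show ?thesis
    by linarith
qed

lemma (in group) same_centralizer_eq_coset_center:
  assumes "finite (carrier G)" "noncentralizer_graph_regular G" "y \<in> carrier G"
  shows "same_centralizer G y = (\<lambda>z. y \<otimes> z) ` center G"
proof (rule card_seteq[symmetric])
  show "finite (same_centralizer G y)"
    using assms(1) by (auto simp: same_centralizer_def)
  show "(\<lambda>z. y \<otimes> z) ` center G \<subseteq> same_centralizer G y"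
    using assms(3) center_subset_carrier[of G]
    by (auto simp: same_centralizer_def centralizer_mult_center)
  have "inj_on (\<lambda>z. y \<otimes> z) (center G)"
    using inj_on_cmult[OF assms(3)] center_subset_carrier[of G] by (rule inj_on_subset)
  then show "card (same_centralizer G y) \<le> card ((\<lambda>z. y \<otimes> z) ` center G)"
    by (simp add: card_image card_same_centralizer_if_regular[OF assms])
qed

lemma (in group) square_in_center_if_regular:
  assumes "finite (carrier G)" "noncentralizer_graph_regular G" "y \<in> carrier G"
  shows "y \<otimes> y \<in> center G"
proof -
  have "inv y \<in> same_centralizer G y"
    using centralizer_inv assms(3) by (auto simp: same_centralizer_def)
  then obtain z where z: "z \<in> center G" and inv_y: "inv y = y \<otimes> z"
    using same_centralizer_eq_coset_center[OF assms] by auto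
  have "z \<in> carrier G"
    using z center_subset_carrier[of G] by blast
  then have "y \<otimes> y \<otimes> z = y \<otimes> inv y"
    using assms(3) by (simp add: m_assoc inv_y)
  then have "y \<otimes> y \<otimes> z = \<one>"
    using assms(3) by simp
  then have "y \<otimes> y = inv z"
    using \<open>z \<in> carrier G\<close> assms(3) by (simp add: inv_equality)
  then show ?thesis
    using subgroup.m_inv_closed[OF subgroup_center z] by simp
qed

definition commutator :: "('a, 'b) monoid_scheme \<Rightarrow> 'a \<Rightarrow> 'a \<Rightarrow> 'a" where
  "commutator G g h = g \<otimes>\<^bsub>G\<^esub> h \<otimes>\<^bsub>G\<^esub> inv\<^bsub>G\<^esub> g \<otimes>\<^bsub>G\<^esub> inv\<^bsub>G\<^esub> h"

lemma (in group) commutator_closed [simp]: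
  "g \<in> carrier G \<Longrightarrow> h \<in> carrier G \<Longrightarrow> commutator G g h \<in> carrier G"
  by (simp add: commutator_def)

lemma (in group) commutator_eq_one_iff:
  assumes "g \<in> carrier G" "h \<in> carrier G"
  shows "commutator G g h = \<one> \<longleftrightarrow> g \<otimes> h = h \<otimes> g"
proof -
  have "commutator G g h = \<one> \<longleftrightarrow> g \<otimes> h \<otimes> inv g = h"
    using assms by (simp add: commutator_def inv_solve_right')
  also have "\<dots> \<longleftrightarrow> g \<otimes> h = h \<otimes> g"
    using assms by (simp add: inv_solve_right')
  finally show ?thesis .
qed

lemma (in group) commutator_in_center_if_squares_in_center:
  assumes squares: "\<And>y. y \<in> carrier G \<Longrightarrow> y \<otimes> y \<in> center G"
    and g: "g \<in> carrier G" and h: "h \<in> carrier G"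
  shows "commutator G g h \<in> center G"
proof -
  interpret Z: subgroup "center G" G
    by (rule subgroup_center)
  define a where "a = inv (g \<otimes> g)"
  define b where "b = inv (h \<otimes> h)"
  have a: "a \<in> center G" and b: "b \<in> center G"
    using squares g h by (simp_all add: a_def b_def)
  have aG: "a \<in> carrier G" and bG: "b \<in> carrier G"
    using a b center_subset_carrier[of G] by auto
  have "inv g = g \<otimes> a" and "inv h = h \<otimes> b"
    using g h by (simp_all add: a_def b_def inv_mult_group flip: m_assoc)
  then have "commutator G g h = g \<otimes> h \<otimes> g \<otimes> (a \<otimes> h) \<otimes> b"
    using g h aG bG by (simp add: commutator_def m_assoc)
  also have "\<dots> = (g \<otimes> h) \<otimes> (g \<otimes> h) \<otimes> a \<otimes> b"
    using g h aG bG by (simp add: center_commute[OF a h] m_assoc)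
  finally show ?thesis
    using squares g h a b by simp
qed

lemma (in group) commutator_mult_left:
  assumes g: "g \<in> carrier G" and h: "h \<in> carrier G" and x: "x \<in> carrier G"
    and central: "commutator G h x \<in> center G"
  shows "commutator G (g \<otimes> h) x = commutator G g x \<otimes> commutator G h x"
proof -
  have "commutator G (g \<otimes> h) x = g \<otimes> (commutator G h x \<otimes> (x \<otimes> inv g \<otimes> inv x))"
    using g h x by (simp add: commutator_def inv_mult_group m_assoc) (simp flip: m_assoc)
  also have "\<dots> = g \<otimes> (x \<otimes> inv g \<otimes> inv x) \<otimes> commutator G h x"
    using g h x by (simp add: center_commute[OF central] m_assoc)
  also have "\<dots> = commutator G g x \<otimes> commutator G h x"
    using g x by (simp add: commutator_def m_assoc)
  finally show ?thesis .
qed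

lemma (in group_hom) FactGroup_iso_image:
  "G Mod kernel G H h \<cong> subgroup_generated H (h ` carrier G)"
proof -
  have "group_hom G (subgroup_generated H (h ` carrier G)) h"
    using hom_into_subgroup[OF homh subset_refl]
    by (simp add: group_hom_def group_hom_axioms_def)
  moreover have "carrier (subgroup_generated H (h ` carrier G)) = h ` carrier G"
    by (rule subgroup.carrier_subgroup_generated_subgroup[OF img_is_subgroup])
  ultimately show ?thesis
    using group_hom.FactGroup_iso by (fastforce simp: kernel_def)
qed

theorem theorem2p10:
  fixes G :: "('a, 'b) monoid_scheme"
  assumes "group G" and "finite (carrier G)"
    and "noncentralizer_graph_regular G"
    and "x \<in> carrier G"
  shows "centralizer G x \<lhd> G \<and>
         (\<exists>H. subgroup H G \<and> H \<subseteq> center G \<and>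
              G Mod (centralizer G x) \<cong> subgroup_generated G H)"
proof -
  interpret group G by fact
  let ?f = "\<lambda>g. commutator G g x"
  have squares: "y \<otimes>\<^bsub>G\<^esub> y \<in> center G" if "y \<in> carrier G" for y
    using square_in_center_if_regular[OF assms(2,3) that] .
  have central: "?f g \<in> center G" if "g \<in> carrier G" for g
    using commutator_in_center_if_squares_in_center[OF squares that assms(4)] .
  have "?f \<in> hom G G"
    using central assms(4) by (intro homI) (simp_all add: commutator_mult_left)
  then interpret f: group_hom G G ?f
    by (simp add: group_hom_def group_hom_axioms_def)
  have "kernel G G ?f = centralizer G x"
    using assms(4) by (auto simp: kernel_def centralizer_def commutator_eq_one_iff)
  moreover have "?f ` carrier G \<subseteq> center G"
    using central by blast
  ultimately show ?thesis
    using f.normal_kernel f.FactGroup_iso_image f.img_is_subgroup by auto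
qed

end
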